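(* Let $1\le b<M$ and let $C$ be the array code over $\mathbb{F}_q$ whose columns are associated with all $b$-dimensional subspaces of $\mathbb{F}_q^M$, each exactly once. Then $C$ has node locality $r_{\mathrm n}=2$, and symbol locality $r_{\mathrm s}=1$ if $b>1$ and $r_{\mathrm s}=2$ if $b=1$.
   Context: $q$ is a prime power. A $[b\times n,M,d]$ array code over $\mathbb{F}_q$ is an $\mathbb{F}_q$-linear space of $b\times n$ matrices of dimension $M$. Given $b$-dimensional subspaces $V_1,\dots,V_n$ of $\mathbb{F}_q^M$, the array code whose columns are associated with them is obtained by placing a basis of $V_j$ as columns $(j-1)b+1,\dots,jb$ (the $j$th thick column) of an $M\times bn$ matrix $G$ and taking all arrays whose column-by-column flattening lies in the row space of $G$. A set $S\subseteq[n]\setminus\{j\}$ is a recovery set for codeword column $j$ if every entry $c_{i,j}$ ($i\in[b]$) is a fixed $\mathbb{F}_q$-linear combination (possibly different for each $i$) of the entries in the columns indexed by $S$, valid for all codewords; equivalently $V_j\subseteq\sum_{k\in S}V_k$. It is a recovery set for symbol $(i,j)$ if $c_{i,j}$ is such a fixed linear combination; equivalently the $i$th column of the $j$th thick column of $G$ lies in $\sum_{k\in S}V_k$. The node locality $r_{\mathrm n}$ (resp. symbol locality $r_{\mathrm s}$) is the smallest $r$ such that every codeword column (resp. every symbol) has a recovery set of size at most $r$. *)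

theory Defs
  imports "HOL-Analysis.Analysis"
begin

text \<open>Array codes over a finite field 'a whose thick columns are associated with
  subspaces of 'a^'m (so M = CARD('m)). Columns are indexed by a set N; column j
  is associated with the subspace Vf j, and Bf j i (i < b) is the i-th column of the
  j-th thick column of the generator matrix G (a chosen basis of Vf j).\<close>

definition node_recovery_set ::
  "'c set \<Rightarrow> ('c \<Rightarrow> ('a::field^'m) set) \<Rightarrow> 'c \<Rightarrow> 'c set \<Rightarrow> bool" where
  "node_recovery_set N Vf j S \<longleftrightarrow>
     S \<subseteq> N - {j} \<and> Vf j \<subseteq> vec.span (\<Union>k\<in>S. Vf k)"

definition symbol_recovery_set ::
  "'c set \<Rightarrow> ('c \<Rightarrow> ('a::field^'m) set) \<Rightarrow> ('c \<Rightarrow> nat \<Rightarrow> 'a^'m)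
     \<Rightarrow> nat \<Rightarrow> 'c \<Rightarrow> 'c set \<Rightarrow> bool" where
  "symbol_recovery_set N Vf Bf i j S \<longleftrightarrow>
     S \<subseteq> N - {j} \<and> Bf j i \<in> vec.span (\<Union>k\<in>S. Vf k)"

definition node_locality ::
  "'c set \<Rightarrow> ('c \<Rightarrow> ('a::field^'m) set) \<Rightarrow> nat" where
  "node_locality N Vf =
     (LEAST r. \<forall>j\<in>N. \<exists>S. node_recovery_set N Vf j S \<and> card S \<le> r)"

definition symbol_locality ::
  "'c set \<Rightarrow> ('c \<Rightarrow> ('a::field^'m) set) \<Rightarrow> ('c \<Rightarrow> nat \<Rightarrow> 'a^'m) \<Rightarrow> nat \<Rightarrow> nat" where
  "symbol_locality N Vf Bf b =
     (LEAST r. \<forall>j\<in>N. \<forall>i<b. \<exists>S. symbol_recovery_set N Vf Bf i j S \<and> card S \<le> r)"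

definition is_ordered_basis :: "nat \<Rightarrow> (nat \<Rightarrow> 'a::field^'m) \<Rightarrow> ('a^'m) set \<Rightarrow> bool" where
  "is_ordered_basis b B V \<longleftrightarrow>
     inj_on B {..<b} \<and> vec.independent (B ` {..<b}) \<and> vec.span (B ` {..<b}) = V"

end

theory Submission
  imports Defs
begin

text \<open>A column V is never recovered from a single other column W: V \<subseteq> W forces V = W for
  subspaces of equal dimension, and for b = 1 the same applies to its only symbol. Conversely, as
  b < M there is a vector u outside V. Replacing one basis vector k of V by u, respectively by k + u,
  yields two further b-dimensional subspaces whose sum contains k = (k + u) - u and hence V; and if
  b \<ge> 2, every basis vector of V other than k already lies in the first of them.\<close>

definition grassmannian :: "nat \<Rightarrow> ('a::field^'m) set set" where
  "grassmannian b = {V. vec.subspace V \<and> vec.dim V = b}"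

lemma grassmannian_eq_of_subset:
  assumes "V \<in> grassmannian b" "W \<in> grassmannian b" "V \<subseteq> W"
  shows "V = W"
  using assms vec.subspace_dim_equal[of V W] unfolding grassmannian_def by simp

lemma grassmannian_nonempty:
  assumes "b \<le> CARD('m)"
  shows "\<exists>V::('a::field^'m) set. V \<in> grassmannian b"
proof -
  obtain B :: "('a^'m) set" where B: "vec.independent B" "card B = CARD('m)"
    using vec.basis_exists[of UNIV] vec_dim_card by metis
  then obtain A where "A \<subseteq> B" "card A = b"
    using assms by (metis obtain_subset_with_card_n)
  with B have "vec.independent A" "card A = b"
    using vec.independent_mono by auto
  then have "vec.span A \<in> grassmannian b"
    unfolding grassmannian_def by (simp add: vec.dim_eq_card_independent)
  then show ?thesis ..
qed

lemma exists_not_in_grassmannian: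
  assumes "V \<in> grassmannian b" "b < CARD('m)"
  shows "\<exists>u::'a::field^'m. u \<notin> V"
proof (rule ccontr)
  assume "\<nexists>u. u \<notin> V"
  then have "V = UNIV"
    by blast
  then show False
    using assms vec_dim_card[where 'a='a and 'n='m] unfolding grassmannian_def by simp
qed

lemma span_insert_in_grassmannian:
  fixes A :: "('a::field^'m) set"
  assumes "vec.independent A" "u \<notin> vec.span A"
  shows "vec.span (insert u A) \<in> grassmannian (Suc (card A))"
proof -
  have "vec.independent (insert u A)"
    using assms vec.independent_insertI by blast
  moreover have "u \<notin> A" "finite A"
    using assms vec.span_base vec.finiteI_independent by blast+
  ultimately show ?thesis
    unfolding grassmannian_def
    by (simp add: vec.dim_eq_card_independent)
qed

lemma basis_exchange_in_grassmannian:
  assumes V: "V \<in> grassmannian b"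
    and B: "B \<subseteq> V" "vec.independent B" "card B = b"
    and "k \<in> B" and "u \<notin> V"
  shows "vec.span (insert u (B - {k})) \<in> grassmannian b"
    and "vec.span (insert u (B - {k})) \<noteq> V"
proof -
  have "vec.span (B - {k}) \<subseteq> V"
    using V B(1) vec.span_minimal unfolding grassmannian_def by blast
  then have "u \<notin> vec.span (B - {k})"
    using \<open>u \<notin> V\<close> by blast
  moreover have "Suc (card (B - {k})) = b"
    using B(2,3) \<open>k \<in> B\<close> vec.finiteI_independent
    by (metis card_Suc_Diff1)
  ultimately show "vec.span (insert u (B - {k})) \<in> grassmannian b"
    using span_insert_in_grassmannian[of "B - {k}" u] B(2) vec.independent_mono by fastforce
  show "vec.span (insert u (B - {k})) \<noteq> V"
    using \<open>u \<notin> V\<close> vec.span_base by blast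
qed

lemma node_recovery_set_card_le_two:
  assumes "V \<in> grassmannian b" "1 \<le> b" "b < CARD('m)"
  shows "\<exists>S. node_recovery_set (grassmannian b) id (V::('a::field^'m) set) S \<and> card S \<le> 2"
proof -
  obtain B where B: "B \<subseteq> V" "vec.independent B" "V \<subseteq> vec.span B" "card B = b"
    using vec.basis_exists[of V] assms(1) unfolding grassmannian_def by blast
  then obtain k where "k \<in> B"
    using assms(2) by fastforce
  obtain u where u: "u \<notin> V"
    using exists_not_in_grassmannian assms(1,3) by blast
  have "k \<in> V"
    using B(1) \<open>k \<in> B\<close> by blast
  then have "k + u \<notin> V"
    using u assms(1) vec.subspace_diff unfolding grassmannian_def by force
  define W1 where "W1 = vec.span (insert u (B - {k}))"
  define W2 where "W2 = vec.span (insert (k + u) (B - {k}))"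
  have W: "W1 \<in> grassmannian b" "W1 \<noteq> V" "W2 \<in> grassmannian b" "W2 \<noteq> V"
    unfolding W1_def W2_def
    using basis_exchange_in_grassmannian[OF assms(1) B(1,2,4) \<open>k \<in> B\<close>] u \<open>k + u \<notin> V\<close>
    by auto
  let ?T = "vec.span (W1 \<union> W2)"
  have "u \<in> ?T" "k + u \<in> ?T"
    unfolding W1_def W2_def by (simp_all add: vec.span_base)
  then have "k \<in> ?T"
    using vec.span_diff by fastforce
  moreover have "B - {k} \<subseteq> ?T"
    unfolding W1_def by (auto intro: vec.span_base)
  ultimately have "B \<subseteq> ?T"
    by blast
  then have "V \<subseteq> ?T"
    using B(3) vec.span_minimal vec.subspace_span by blast
  then have "node_recovery_set (grassmannian b) id V {W1, W2}"
    unfolding node_recovery_set_def using W by auto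
  moreover have "card {W1, W2} \<le> 2"
    by (simp add: card_insert_if)
  ultimately show ?thesis
    by blast
qed

lemma node_recovery_set_card_ge_two:
  assumes "V \<in> grassmannian b" "1 \<le> b" "finite S"
    and "node_recovery_set (grassmannian b) id (V::('a::field^'m) set) S"
  shows "2 \<le> card S"
proof (rule ccontr)
  assume "\<not> 2 \<le> card S"
  then have "card S = 0 \<or> card S = 1"
    by linarith
  then consider "S = {}" | W where "S = {W}"
    using \<open>finite S\<close> card_1_singletonE card_0_eq by metis
  then show False
  proof cases
    case 1
    then have "V \<subseteq> vec.span {}"
      using assms(4) unfolding node_recovery_set_def by simp
    then have "vec.dim V \<le> vec.dim (vec.span ({} :: ('a^'m) set))"
      by (rule vec.dim_subset)
    then have "vec.dim V \<le> 0"
      by (simp only: vec.dim_span vec.dim_empty)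
    moreover have "vec.dim V = b"
      using assms(1) unfolding grassmannian_def by simp
    ultimately show False
      using assms(2) by linarith
  next
    case 2
    then have W: "W \<in> grassmannian b" "W \<noteq> V" "V \<subseteq> vec.span W"
      using assms(4) unfolding node_recovery_set_def by auto
    then have "V \<subseteq> W"
      using vec.span_eq_iff unfolding grassmannian_def by blast
    then show False
      using grassmannian_eq_of_subset assms(1) W(1,2) by blast
  qed
qed

lemma ordered_basis_mem:
  assumes "is_ordered_basis b B V" "i < b"
  shows "B i \<in> V"
  using assms vec.span_base[of "B i" "B ` {..<b}"] unfolding is_ordered_basis_def by simp

lemma ordered_basis_nonzero:
  assumes "is_ordered_basis b B V" "i < b"
  shows "B i \<noteq> 0"
proof
  assume "B i = 0"
  moreover have "B i \<in> B ` {..<b}"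
    using assms(2) by simp
  ultimately have "vec.dependent (B ` {..<b})"
    using vec.dependent_zero by simp
  then show False
    using assms(1) unfolding is_ordered_basis_def by simp
qed

lemma symbol_recovery_set_nonempty:
  assumes "Bf j i \<noteq> 0" "symbol_recovery_set N Vf Bf i j S"
  shows "S \<noteq> {}"
  using assms unfolding symbol_recovery_set_def by auto

lemma symbol_recovery_set_of_node_recovery_set:
  assumes "Bf j i \<in> Vf j" "node_recovery_set N Vf j S"
  shows "symbol_recovery_set N Vf Bf i j S"
  using assms unfolding node_recovery_set_def symbol_recovery_set_def by blast

lemma node_recovery_set_of_symbol_recovery_set_dim_one:
  assumes "is_ordered_basis 1 (Bf j) (Vf j)" "symbol_recovery_set N Vf Bf 0 j S"
  shows "node_recovery_set N Vf j S"
proof -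
  have "Vf j = vec.span {Bf j 0}"
    using assms(1) unfolding is_ordered_basis_def by (simp add: lessThan_Suc)
  also have "\<dots> \<subseteq> vec.span (\<Union>k\<in>S. Vf k)"
    using assms(2) vec.span_minimal[OF _ vec.subspace_span]
    unfolding symbol_recovery_set_def by blast
  finally show ?thesis
    using assms(2) unfolding node_recovery_set_def symbol_recovery_set_def by blast
qed

lemma symbol_recovery_set_singleton:
  assumes "V \<in> grassmannian b" "2 \<le> b" "b < CARD('m)"
    and "is_ordered_basis b (Bf V) V" "i < b"
  shows "\<exists>W. symbol_recovery_set (grassmannian b) id Bf i (V::('a::field^'m) set) {W}"
proof -
  let ?B = "Bf V ` {..<b}"
  have inj: "inj_on (Bf V) {..<b}" and indep: "vec.independent ?B" and span: "vec.span ?B = V"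
    using assms(4) unfolding is_ordered_basis_def by auto
  obtain j where j: "j < b" "j \<noteq> i"
    using assms(2) by (intro that[of "if i = 0 then 1 else 0"]) auto
  have "?B \<subseteq> V"
    using vec.span_superset[of ?B] span by simp
  moreover have "card ?B = b"
    using inj by (simp add: card_image)
  moreover obtain u where "u \<notin> V"
    using exists_not_in_grassmannian assms(1,3) by blast
  moreover have "Bf V j \<in> ?B"
    using j(1) by simp
  ultimately have W: "vec.span (insert u (?B - {Bf V j})) \<in> grassmannian b"
      "vec.span (insert u (?B - {Bf V j})) \<noteq> V"
    using basis_exchange_in_grassmannian[OF assms(1) _ indep] by blast+
  have "Bf V i \<noteq> Bf V j"
    using inj_on_contraD[OF inj j(2)[symmetric]] j(1) assms(5) by simp
  then have "Bf V i \<in> vec.span (insert u (?B - {Bf V j}))"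
    using assms(5) by (simp add: vec.span_base)
  then have "symbol_recovery_set (grassmannian b) id Bf i V {vec.span (insert u (?B - {Bf V j}))}"
    using W unfolding symbol_recovery_set_def by (simp add: vec.span_span)
  then show ?thesis ..
qed

lemma node_locality_grassmannian:
  assumes "1 \<le> b" "b < CARD('m)"
  shows "node_locality (grassmannian b :: ('a::{field,finite}^'m) set set) id = 2"
  unfolding node_locality_def
proof (rule Least_equality)
  show "\<forall>V\<in>grassmannian b. \<exists>S.
    node_recovery_set (grassmannian b) id (V::('a^'m) set) S \<and> card S \<le> 2"
    using node_recovery_set_card_le_two[OF _ assms] by blast
next
  fix r
  assume "\<forall>V\<in>grassmannian b. \<exists>S.
    node_recovery_set (grassmannian b) id (V::('a^'m) set) S \<and> card S \<le> r"
  moreover obtain V0 :: "('a^'m) set" where "V0 \<in> grassmannian b"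
    using grassmannian_nonempty assms(2) by (metis less_imp_le)
  ultimately obtain S where "node_recovery_set (grassmannian b) id V0 S" "card S \<le> r"
    by blast
  then show "2 \<le> r"
    using node_recovery_set_card_ge_two[OF \<open>V0 \<in> grassmannian b\<close> assms(1)] by force
qed

lemma symbol_locality_grassmannian_dim_ge_two:
  assumes "2 \<le> b" "b < CARD('m)"
    and "\<forall>V\<in>grassmannian b. is_ordered_basis b (Bf V) V"
  shows "symbol_locality (grassmannian b :: ('a::{field,finite}^'m) set set) id Bf b = 1"
  unfolding symbol_locality_def
proof (rule Least_equality)
  show "\<forall>V\<in>grassmannian b. \<forall>i<b. \<exists>S.
    symbol_recovery_set (grassmannian b) id Bf i (V::('a^'m) set) S \<and> card S \<le> 1"
  proof (intro ballI allI impI)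
    fix V :: "('a^'m) set" and i :: nat
    assume V: "V \<in> grassmannian b" and "i < b"
    then obtain W where "symbol_recovery_set (grassmannian b) id Bf i V {W}"
      using symbol_recovery_set_singleton[OF V assms(1,2)] assms(3) by blast
    then show "\<exists>S. symbol_recovery_set (grassmannian b) id Bf i V S \<and> card S \<le> 1"
      by (intro exI[of _ "{W}"]) simp
  qed
next
  fix r
  assume "\<forall>V\<in>grassmannian b. \<forall>i<b. \<exists>S.
    symbol_recovery_set (grassmannian b) id Bf i (V::('a^'m) set) S \<and> card S \<le> r"
  moreover obtain V0 :: "('a^'m) set" where V0: "V0 \<in> grassmannian b"
    using grassmannian_nonempty assms(2) by (metis less_imp_le)
  moreover have "0 < b"
    using assms(1) by simp
  ultimately obtain S where S: "symbol_recovery_set (grassmannian b) id Bf 0 V0 S" "card S \<le> r"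
    by blast
  have "Bf V0 0 \<noteq> 0"
    using ordered_basis_nonzero[of b "Bf V0" V0 0] V0 assms(3) \<open>0 < b\<close> by blast
  then have "S \<noteq> {}"
    using symbol_recovery_set_nonempty[OF _ S(1)] by blast
  then show "1 \<le> r"
    using S(2) card_gt_0_iff[of S] by simp
qed

lemma symbol_locality_grassmannian_dim_one:
  assumes "1 < CARD('m)"
    and "\<forall>V\<in>grassmannian 1. is_ordered_basis 1 (Bf V) V"
  shows "symbol_locality (grassmannian 1 :: ('a::{field,finite}^'m) set set) id Bf 1 = 2"
  unfolding symbol_locality_def
proof (rule Least_equality)
  show "\<forall>V\<in>grassmannian 1. \<forall>i<1. \<exists>S.
    symbol_recovery_set (grassmannian 1) id Bf i (V::('a^'m) set) S \<and> card S \<le> 2"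
  proof (intro ballI allI impI)
    fix V :: "('a^'m) set" and i :: nat
    assume V: "V \<in> grassmannian 1" and "i < 1"
    obtain S where S: "node_recovery_set (grassmannian 1) id V S" "card S \<le> 2"
      using node_recovery_set_card_le_two[OF V order_refl assms(1)] by blast
    have "Bf V i \<in> id V"
      using ordered_basis_mem[of 1 "Bf V" V i] V assms(2) \<open>i < 1\<close> by simp
    then show "\<exists>S. symbol_recovery_set (grassmannian 1) id Bf i V S \<and> card S \<le> 2"
      using symbol_recovery_set_of_node_recovery_set[OF _ S(1)] S(2) by blast
  qed
next
  fix r
  assume "\<forall>V\<in>grassmannian 1. \<forall>i<1. \<exists>S.
    symbol_recovery_set (grassmannian 1) id Bf i (V::('a^'m) set) S \<and> card S \<le> r"
  moreover obtain V0 :: "('a^'m) set" where V0: "V0 \<in> grassmannian 1"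
    using grassmannian_nonempty assms(1) by (metis less_imp_le)
  ultimately obtain S where S: "symbol_recovery_set (grassmannian 1) id Bf 0 V0 S" "card S \<le> r"
    by blast
  then have "node_recovery_set (grassmannian 1) id V0 S"
    using node_recovery_set_of_symbol_recovery_set_dim_one[of Bf V0 id] V0 assms(2) by simp
  then show "2 \<le> r"
    using node_recovery_set_card_ge_two[OF V0] S(2) by force
qed

theorem mainTheorem4:
  fixes b :: nat
    and Bf :: "('a::{field,finite}^'m) set \<Rightarrow> nat \<Rightarrow> 'a^'m"
  defines "N \<equiv> {V :: ('a^'m) set. vec.subspace V \<and> vec.dim V = b}"
  assumes "1 \<le> b" and "b < CARD('m)"
    and "\<forall>V\<in>N. is_ordered_basis b (Bf V) V"
  shows "node_locality N id = 2
       \<and> symbol_locality N id Bf b = (if b > 1 then 1 else 2)"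
proof -
  have N: "N = grassmannian b"
    unfolding N_def grassmannian_def ..
  have "symbol_locality N id Bf b = (if b > 1 then 1 else 2)"
  proof (cases "b > 1")
    case True
    then have "2 \<le> b"
      by simp
    then show ?thesis
      using symbol_locality_grassmannian_dim_ge_two[OF _ assms(3)] assms(4) True unfolding N by simp
  next
    case False
    then have "b = 1"
      using assms(2) by simp
    then show ?thesis
      using symbol_locality_grassmannian_dim_one[of Bf] assms(3,4) unfolding N by simp
  qed
  then show ?thesis
    using node_locality_grassmannian[OF assms(2,3)] unfolding N by simp
qed

end
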